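(* (1) Let $f_1:G_1\to H_1$ and $f_2:G_2\to H_2$ be group homomorphisms and let $f_1\times f_2:G_1\times G_2\to H_1\times H_2$ be $(a_1,a_2)\mapsto (f_1(a_1),f_2(a_2))$. If $f_1$ does not admit a global section, then $\mathrm{sec}(f_1)\leq \mathrm{sec}(f_1\times f_2)$; likewise, if $f_2$ does not admit a global section, then $\mathrm{sec}(f_2)\leq \mathrm{sec}(f_1\times f_2)$. (2) Let $f:G\to H$ be a group homomorphism and $K$ a group. Then $\mathrm{sec}(f\times\mathrm{id}_K)\leq \mathrm{sec}(f)$, with equality whenever $f$ does not admit a global section.
   Context: For a homomorphism $f:G\to H$ and a subgroup $L\le H$, a local section of $f$ on $L$ is a homomorphism $s:L\to G$ with $f\circ s=\mathrm{incl}_L$ (the inclusion $L\hookrightarrow H$); a global section is a local section on $L=H$. The sectional number $\mathrm{sec}(f)$ is the least positive integer $m$ such that there exist proper subgroups $H_1,\ldots,H_m$ of $H$ with $H=H_1\cup\cdots\cup H_m$ and such that $f$ admits a local section on each $H_i$; $\mathrm{sec}(f)=\infty$ if no such $m$ exists. *)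

theory Defs
  imports "HOL-Algebra.Algebra" "HOL-Library.Extended_Nat"
begin

definition local_section ::
  "('a, 'm) monoid_scheme \<Rightarrow> ('b, 'n) monoid_scheme \<Rightarrow> ('a \<Rightarrow> 'b) \<Rightarrow> 'b set \<Rightarrow> ('b \<Rightarrow> 'a) \<Rightarrow> bool"
  where "local_section G H f L s \<longleftrightarrow>
           s \<in> hom (H\<lparr>carrier := L\<rparr>) G \<and> (\<forall>x\<in>L. f (s x) = x)"

definition global_section ::
  "('a, 'm) monoid_scheme \<Rightarrow> ('b, 'n) monoid_scheme \<Rightarrow> ('a \<Rightarrow> 'b) \<Rightarrow> ('b \<Rightarrow> 'a) \<Rightarrow> bool"
  where "global_section G H f s \<longleftrightarrow> local_section G H f (carrier H) s"

definition sec_cover ::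
  "('a, 'm) monoid_scheme \<Rightarrow> ('b, 'n) monoid_scheme \<Rightarrow> ('a \<Rightarrow> 'b) \<Rightarrow> nat \<Rightarrow> bool"
  where "sec_cover G H f m \<longleftrightarrow> m > 0 \<and>
     (\<exists>Hs :: nat \<Rightarrow> 'b set.
        (\<forall>i<m. subgroup (Hs i) H \<and> Hs i \<noteq> carrier H \<and> (\<exists>s. local_section G H f (Hs i) s))
        \<and> (\<Union>i<m. Hs i) = carrier H)"

definition sectional_number ::
  "('a, 'm) monoid_scheme \<Rightarrow> ('b, 'n) monoid_scheme \<Rightarrow> ('a \<Rightarrow> 'b) \<Rightarrow> enat"
  where "sectional_number G H f =
     (if \<exists>m. sec_cover G H f m then enat (LEAST m. sec_cover G H f m) else \<infinity>)"

definition prod_map :: "('a \<Rightarrow> 'b) \<Rightarrow> ('c \<Rightarrow> 'd) \<Rightarrow> ('a \<times> 'c \<Rightarrow> 'b \<times> 'd)"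
  where "prod_map f g = (\<lambda>(a, c). (f a, g c))"

end

theory Submission
  imports Defs
begin

text \<open>Both inequalities come from transporting covers. A cover of H by proper subgroups
  carrying local sections of f gives, subgroup by subgroup, a cover of H \<times> K carrying local
  sections of f \<times> g, as soon as g has a global section. Conversely, if H' is a retract of H
  compatibly with f and f', pulling a cover of H back along the embedding gives a cover of H'
  with local sections of f'; the pulled-back subgroups stay proper precisely because f' admits
  no global section. Applied to the factor embeddings of H1 \<times> H2, this yields part (1), and
  both directions together yield part (2), since the identity of K has a global section.\<close>

lemma sectional_number_mono:
  assumes "\<And>m. sec_cover G H f m \<Longrightarrow> sec_cover G' H' f' m"
  shows "sectional_number G' H' f' \<le> sectional_number G H f"
proof (cases "\<exists>m. sec_cover G H f m")
  case True
  define m0 where "m0 = (LEAST m. sec_cover G H f m)"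
  have "sec_cover G H f m0"
    unfolding m0_def using True by (meson LeastI)
  then have cover': "sec_cover G' H' f' m0"
    by (rule assms)
  then have "(LEAST m. sec_cover G' H' f' m) \<le> m0"
    by (rule Least_le)
  with True cover' show ?thesis
    unfolding sectional_number_def m0_def by auto
next
  case False
  then show ?thesis
    unfolding sectional_number_def by auto
qed

lemma (in group_hom) subgroup_vimage:
  assumes "subgroup L H"
  shows "subgroup {x \<in> carrier G. h x \<in> L} G"
proof (rule G.subgroupI)
  show "{x \<in> carrier G. h x \<in> L} \<noteq> {}"
    using subgroup.one_closed[OF assms] by auto
next
  fix x assume "x \<in> {x \<in> carrier G. h x \<in> L}"
  then show "inv x \<in> {x \<in> carrier G. h x \<in> L}"
    using subgroup.m_inv_closed[OF assms] by auto
next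
  fix x y assume "x \<in> {x \<in> carrier G. h x \<in> L}" "y \<in> {x \<in> carrier G. h x \<in> L}"
  then show "x \<otimes> y \<in> {x \<in> carrier G. h x \<in> L}"
    using subgroup.m_closed[OF assms] by auto
qed auto

lemma local_section_prod:
  assumes "local_section G1 H1 f1 L1 s1" and "local_section G2 H2 f2 L2 s2"
  shows "local_section (G1 \<times>\<times> G2) (H1 \<times>\<times> H2) (prod_map f1 f2) (L1 \<times> L2) (prod_map s1 s2)"
  using assms unfolding local_section_def hom_def by (auto simp: Pi_iff prod_map_def)

lemma sec_cover_prod_global_section:
  assumes H1: "group H1" and H2: "group H2"
    and section2: "global_section G2 H2 f2 s2"
    and cover: "sec_cover G1 H1 f1 m"
  shows "sec_cover (G1 \<times>\<times> G2) (H1 \<times>\<times> H2) (prod_map f1 f2) m"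
proof -
  obtain Hs where m: "m > 0" and union: "(\<Union>i<m. Hs i) = carrier H1"
    and Hs: "\<And>i. i < m \<Longrightarrow> subgroup (Hs i) H1 \<and> Hs i \<noteq> carrier H1
      \<and> (\<exists>s. local_section G1 H1 f1 (Hs i) s)"
    using cover unfolding sec_cover_def by blast
  have "subgroup (Hs i \<times> carrier H2) (H1 \<times>\<times> H2)
      \<and> Hs i \<times> carrier H2 \<noteq> carrier (H1 \<times>\<times> H2)
      \<and> (\<exists>s. local_section (G1 \<times>\<times> G2) (H1 \<times>\<times> H2) (prod_map f1 f2) (Hs i \<times> carrier H2) s)"
    if i: "i < m" for i
  proof (intro conjI)
    show "subgroup (Hs i \<times> carrier H2) (H1 \<times>\<times> H2)"
      using Hs[OF i] DirProd_subgroups[OF H1 _ H2 group.subgroup_self[OF H2]] by blast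
    have "\<one>\<^bsub>H2\<^esub> \<in> carrier H2"
      using H2 by (simp add: group.is_monoid monoid.one_closed)
    then show "Hs i \<times> carrier H2 \<noteq> carrier (H1 \<times>\<times> H2)"
      using Hs[OF i] by (simp add: Times_eq_cancel2)
    obtain s1 where "local_section G1 H1 f1 (Hs i) s1"
      using Hs[OF i] by blast
    then show "\<exists>s. local_section (G1 \<times>\<times> G2) (H1 \<times>\<times> H2) (prod_map f1 f2) (Hs i \<times> carrier H2) s"
      using local_section_prod section2 unfolding global_section_def by blast
  qed
  moreover have "(\<Union>i<m. Hs i \<times> carrier H2) = carrier (H1 \<times>\<times> H2)"
    using union by auto
  ultimately show ?thesis
    unfolding sec_cover_def using m by (intro conjI exI[of _ "\<lambda>i. Hs i \<times> carrier H2"]) simp_all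
qed

lemma local_section_pullback:
  assumes \<phi>: "\<phi> \<in> hom H' H" and \<psi>: "\<psi> \<in> hom G G'"
    and commute: "\<And>g. g \<in> carrier G \<Longrightarrow> f' (\<psi> g) = \<pi> (f g)"
    and retract: "\<And>x. x \<in> carrier H' \<Longrightarrow> \<pi> (\<phi> x) = x"
    and s_local: "local_section G H f L s"
  shows "local_section G' H' f' {x \<in> carrier H'. \<phi> x \<in> L} (\<psi> \<circ> s \<circ> \<phi>)"
proof -
  have s_hom: "s \<in> hom (H\<lparr>carrier := L\<rparr>) G" and s_inv: "\<And>y. y \<in> L \<Longrightarrow> f (s y) = y"
    using s_local unfolding local_section_def by auto
  have s_carrier: "s y \<in> carrier G" if "y \<in> L" for y
    using hom_in_carrier[OF s_hom] that by simp
  show ?thesis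
    unfolding local_section_def
  proof (intro conjI ballI homI)
    fix x assume "x \<in> carrier (H'\<lparr>carrier := {x \<in> carrier H'. \<phi> x \<in> L}\<rparr>)"
    then show "(\<psi> \<circ> s \<circ> \<phi>) x \<in> carrier G'"
      using s_carrier hom_in_carrier[OF \<psi>] by simp
  next
    fix x y assume "x \<in> carrier (H'\<lparr>carrier := {x \<in> carrier H'. \<phi> x \<in> L}\<rparr>)"
      and "y \<in> carrier (H'\<lparr>carrier := {x \<in> carrier H'. \<phi> x \<in> L}\<rparr>)"
    then have x: "x \<in> carrier H'" "\<phi> x \<in> L" and y: "y \<in> carrier H'" "\<phi> y \<in> L"
      by auto
    have "s (\<phi> (x \<otimes>\<^bsub>H'\<^esub> y)) = s (\<phi> x) \<otimes>\<^bsub>G\<^esub> s (\<phi> y)"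
      using \<phi> s_hom x y unfolding hom_def by auto
    then show "(\<psi> \<circ> s \<circ> \<phi>) (x \<otimes>\<^bsub>H'\<lparr>carrier := {x \<in> carrier H'. \<phi> x \<in> L}\<rparr>\<^esub> y)
        = (\<psi> \<circ> s \<circ> \<phi>) x \<otimes>\<^bsub>G'\<^esub> (\<psi> \<circ> s \<circ> \<phi>) y"
      using \<psi> s_carrier x y unfolding hom_def by simp
  next
    fix x assume "x \<in> {x \<in> carrier H'. \<phi> x \<in> L}"
    then show "f' ((\<psi> \<circ> s \<circ> \<phi>) x) = x"
      using commute s_carrier s_inv retract by simp
  qed
qed

lemma sec_cover_pullback:
  assumes H': "group H'" and H: "group H"
    and \<phi>: "\<phi> \<in> hom H' H" and \<psi>: "\<psi> \<in> hom G G'"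
    and commute: "\<And>g. g \<in> carrier G \<Longrightarrow> f' (\<psi> g) = \<pi> (f g)"
    and retract: "\<And>x. x \<in> carrier H' \<Longrightarrow> \<pi> (\<phi> x) = x"
    and no_section: "\<nexists>s'. global_section G' H' f' s'"
    and cover: "sec_cover G H f m"
  shows "sec_cover G' H' f' m"
proof -
  interpret group_hom H' H \<phi>
    using H' H \<phi> by (simp add: group_hom_def group_hom_axioms_def)
  obtain Hs where m: "m > 0" and union: "(\<Union>i<m. Hs i) = carrier H"
    and Hs: "\<And>i. i < m \<Longrightarrow> subgroup (Hs i) H \<and> Hs i \<noteq> carrier H
      \<and> (\<exists>s. local_section G H f (Hs i) s)"
    using cover unfolding sec_cover_def by blast
  define M where "M i = {x \<in> carrier H'. \<phi> x \<in> Hs i}" for i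
  have "subgroup (M i) H' \<and> M i \<noteq> carrier H' \<and> (\<exists>s'. local_section G' H' f' (M i) s')"
    if i: "i < m" for i
  proof -
    obtain s where s: "local_section G H f (Hs i) s"
      using Hs[OF i] by blast
    have pulled_back: "local_section G' H' f' (M i) (\<psi> \<circ> s \<circ> \<phi>)"
      unfolding M_def using \<phi> \<psi> commute retract s by (rule local_section_pullback)
    with no_section have "M i \<noteq> carrier H'"
      unfolding global_section_def by auto
    with pulled_back show ?thesis
      unfolding M_def using subgroup_vimage Hs[OF i] by blast
  qed
  moreover have "(\<Union>i<m. M i) = carrier H'"
    using union hom_in_carrier[OF \<phi>] unfolding M_def by blast
  ultimately show ?thesis
    unfolding sec_cover_def using m by blast
qed

lemma sectional_number_le_prod_left:
  assumes H1: "group H1" and H2: "group H2" and no_section: "\<nexists>s. global_section G1 H1 f1 s"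
  shows "sectional_number G1 H1 f1 \<le> sectional_number (G1 \<times>\<times> G2) (H1 \<times>\<times> H2) (prod_map f1 f2)"
proof (rule sectional_number_mono)
  fix m assume cover: "sec_cover (G1 \<times>\<times> G2) (H1 \<times>\<times> H2) (prod_map f1 f2) m"
  have embedding: "(\<lambda>x. (x, \<one>\<^bsub>H2\<^esub>)) \<in> hom H1 (H1 \<times>\<times> H2)"
    using H2 by (auto simp: hom_def group.is_monoid)
  have projection: "fst \<in> hom (G1 \<times>\<times> G2) G1"
    by (auto simp: hom_def mult_DirProd')
  show "sec_cover G1 H1 f1 m"
    by (rule sec_cover_pullback[where \<pi> = fst,
          OF H1 DirProd_group[OF H1 H2] embedding projection _ _ no_section cover])
      (auto simp: prod_map_def)
qed

lemma sectional_number_le_prod_right: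
  assumes H1: "group H1" and H2: "group H2" and no_section: "\<nexists>s. global_section G2 H2 f2 s"
  shows "sectional_number G2 H2 f2 \<le> sectional_number (G1 \<times>\<times> G2) (H1 \<times>\<times> H2) (prod_map f1 f2)"
proof (rule sectional_number_mono)
  fix m assume cover: "sec_cover (G1 \<times>\<times> G2) (H1 \<times>\<times> H2) (prod_map f1 f2) m"
  have embedding: "(\<lambda>x. (\<one>\<^bsub>H1\<^esub>, x)) \<in> hom H2 (H1 \<times>\<times> H2)"
    using H1 by (auto simp: hom_def group.is_monoid)
  have projection: "snd \<in> hom (G1 \<times>\<times> G2) G2"
    by (auto simp: hom_def mult_DirProd')
  show "sec_cover G2 H2 f2 m"
    by (rule sec_cover_pullback[where \<pi> = snd,
          OF H2 DirProd_group[OF H1 H2] embedding projection _ _ no_section cover])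
      (auto simp: prod_map_def)
qed

lemma sectional_number_prod_le:
  assumes "group H1" and "group H2" and "global_section G2 H2 f2 s2"
  shows "sectional_number (G1 \<times>\<times> G2) (H1 \<times>\<times> H2) (prod_map f1 f2) \<le> sectional_number G1 H1 f1"
  using assms by (intro sectional_number_mono sec_cover_prod_global_section)

lemma global_section_id: "global_section K K (\<lambda>x. x) (\<lambda>x. x)"
  by (simp add: global_section_def local_section_def hom_def)

theorem theorem3p4:
  fixes G1 :: "('a, 'm1) monoid_scheme" and H1 :: "('b, 'n1) monoid_scheme"
    and G2 :: "('c, 'm2) monoid_scheme" and H2 :: "('d, 'n2) monoid_scheme"
    and f1 :: "'a \<Rightarrow> 'b" and f2 :: "'c \<Rightarrow> 'd"
    and G :: "('e, 'm3) monoid_scheme" and H :: "('g, 'n3) monoid_scheme"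
    and K :: "('k, 'm4) monoid_scheme" and f :: "'e \<Rightarrow> 'g"
  shows
   "(group G1 \<and> group H1 \<and> group G2 \<and> group H2 \<and> f1 \<in> hom G1 H1 \<and> f2 \<in> hom G2 H2 \<longrightarrow>
      ((\<not> (\<exists>s. global_section G1 H1 f1 s)) \<longrightarrow>
          sectional_number G1 H1 f1 \<le> sectional_number (G1 \<times>\<times> G2) (H1 \<times>\<times> H2) (prod_map f1 f2))
    \<and> ((\<not> (\<exists>s. global_section G2 H2 f2 s)) \<longrightarrow>
          sectional_number G2 H2 f2 \<le> sectional_number (G1 \<times>\<times> G2) (H1 \<times>\<times> H2) (prod_map f1 f2)))
    \<and>
    (group G \<and> group H \<and> group K \<and> f \<in> hom G H \<longrightarrow>
      sectional_number (G \<times>\<times> K) (H \<times>\<times> K) (prod_map f (\<lambda>x. x)) \<le> sectional_number G H f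
    \<and> ((\<not> (\<exists>s. global_section G H f s)) \<longrightarrow>
          sectional_number (G \<times>\<times> K) (H \<times>\<times> K) (prod_map f (\<lambda>x. x)) = sectional_number G H f))"
proof (intro conjI impI)
  assume "group G1 \<and> group H1 \<and> group G2 \<and> group H2 \<and> f1 \<in> hom G1 H1 \<and> f2 \<in> hom G2 H2"
  then have H1: "group H1" and H2: "group H2" by simp_all
  show "sectional_number G1 H1 f1 \<le> sectional_number (G1 \<times>\<times> G2) (H1 \<times>\<times> H2) (prod_map f1 f2)"
    if "\<nexists>s. global_section G1 H1 f1 s"
    using H1 H2 that by (rule sectional_number_le_prod_left)
  show "sectional_number G2 H2 f2 \<le> sectional_number (G1 \<times>\<times> G2) (H1 \<times>\<times> H2) (prod_map f1 f2)"
    if "\<nexists>s. global_section G2 H2 f2 s"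
    using H1 H2 that by (rule sectional_number_le_prod_right)
next
  assume "group G \<and> group H \<and> group K \<and> f \<in> hom G H"
  then have H: "group H" and K: "group K" by simp_all
  show le: "sectional_number (G \<times>\<times> K) (H \<times>\<times> K) (prod_map f (\<lambda>x. x)) \<le> sectional_number G H f"
    using sectional_number_prod_le[OF H K global_section_id] .
  assume "\<nexists>s. global_section G H f s"
  with H K have "sectional_number G H f \<le> sectional_number (G \<times>\<times> K) (H \<times>\<times> K) (prod_map f (\<lambda>x. x))"
    by (rule sectional_number_le_prod_left)
  with le show "sectional_number (G \<times>\<times> K) (H \<times>\<times> K) (prod_map f (\<lambda>x. x)) = sectional_number G H f"
    by (rule antisym)
qed

end
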